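(* Let $A\in M_n(\mathbb{Z})$ be invertible such that $x\mapsto A^{-1}x$ is a similarity with respect to Euclidean distance, and let $D\subset\mathbb{Z}^n$ be a subset of a complete residue system mod $A$. Suppose every element of $T_{A,D-D}$ has a unique $(A,D-D)$-representation. Then for every $\lambda\in[0,\dim_B T_{A,D}]$, the level set $\Phi_{A,D}^{-1}(\lambda)$ is dense in $F_{A,D}$.
   Context: A similarity means a map $f$ with $\|f(x)-f(y)\|=c\|x-y\|$ for some $c\in(0,1)$ and all $x,y$. For finite $E\subset\mathbb{R}^n$, $\pi_{A,E}((e_j)_{j\ge1})=\sum_{j\ge1}A^{-j}e_j$ for $(e_j)\in E^{\mathbb{N}}$, $T_{A,E}=\pi_{A,E}(E^{\mathbb{N}})$, and an $(A,E)$-representation of $x$ is a sequence $(e_j)\in E^{\mathbb{N}}$ with $\pi_{A,E}((e_j))=x$. $D-D=\{a-b:a,b\in D\}$. A complete residue system mod $A$ is a set $\mathcal{D}\subset\mathbb{Z}^n$ mapping bijectively onto $\mathbb{Z}^n/A\mathbb{Z}^n$. $F_{A,D}=\{\alpha\in\mathbb{R}^n: T_{A,D}\cap(T_{A,D}+\alpha)\ne\emptyset\}$ $(=T_{A,D-D})$. $\Phi_{A,D}$ is the function defined on $\{\alpha\in F_{A,D}:\dim_B(T_{A,D}\cap(T_{A,D}+\alpha)) \text{ exists}\}$ by $\Phi_{A,D}(\alpha)=\dim_B(T_{A,D}\cap(T_{A,D}+\alpha))$, where $\dim_B$ is the box-counting dimension. *)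

theory Defs
  imports "HOL-Analysis.Analysis"
begin

definition int_vecs :: "(real^'n) set" where
  "int_vecs = {x. \<forall>i. x $ i \<in> \<int>}"

definition int_matrix :: "real^'n^'n \<Rightarrow> bool" where
  "int_matrix A \<longleftrightarrow> (\<forall>i j. A $ i $ j \<in> \<int>)"

definition is_similarity :: "(real^'n \<Rightarrow> real^'n) \<Rightarrow> bool" where
  "is_similarity f \<longleftrightarrow> (\<exists>c. 0 < c \<and> c < 1 \<and> (\<forall>x y. norm (f x - f y) = c * norm (x - y)))"

text \<open>Complete residue system mod A: subset of Z^n mapping bijectively onto Z^n / A Z^n.\<close>
definition complete_residue_system :: "real^'n^'n \<Rightarrow> (real^'n) set \<Rightarrow> bool" where
  "complete_residue_system A R \<longleftrightarrow> R \<subseteq> int_vecs \<and>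
     (\<forall>z\<in>int_vecs. \<exists>!d. d \<in> R \<and> z - d \<in> (\<lambda>v. A *v v) ` int_vecs)"

definition diffset :: "'a::ab_group_add set \<Rightarrow> 'a set" where
  "diffset D = {a - b | a b. a \<in> D \<and> b \<in> D}"

text \<open>pi_{A,E}(e) = sum_{j>=1} A^{-j} e_j (sequence indexed from 0, e 0 = e_1).\<close>
definition digit_map :: "real^'n^'n \<Rightarrow> (nat \<Rightarrow> real^'n) \<Rightarrow> real^'n" where
  "digit_map A e = (\<Sum>j. (((*v) (matrix_inv A)) ^^ (Suc j)) (e j))"

definition Tset :: "real^'n^'n \<Rightarrow> (real^'n) set \<Rightarrow> (real^'n) set" where
  "Tset A E = digit_map A ` {e. \<forall>j. e j \<in> E}"

definition is_rep :: "real^'n^'n \<Rightarrow> (real^'n) set \<Rightarrow> real^'n \<Rightarrow> (nat \<Rightarrow> real^'n) \<Rightarrow> bool" where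
  "is_rep A E x e \<longleftrightarrow> (\<forall>j. e j \<in> E) \<and> digit_map A e = x"

definition Fset :: "real^'n^'n \<Rightarrow> (real^'n) set \<Rightarrow> (real^'n) set" where
  "Fset A D = {\<alpha>. Tset A D \<inter> ((\<lambda>x. x + \<alpha>) ` Tset A D) \<noteq> {}}"

definition cover_number :: "real \<Rightarrow> 'a::metric_space set \<Rightarrow> nat" where
  "cover_number \<delta> F = (LEAST k. \<exists>C. finite C \<and> card C = k \<and> F \<subseteq> \<Union>C \<and> (\<forall>S\<in>C. diameter S \<le> \<delta>))"

definition box_dim_exists :: "'a::metric_space set \<Rightarrow> bool" where
  "box_dim_exists F \<longleftrightarrow> F \<noteq> {} \<and> bounded F \<and>
     (\<exists>d. ((\<lambda>\<delta>. ln (real (cover_number \<delta> F)) / (- ln \<delta>)) \<longlongrightarrow> d) (at_right 0))"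

definition box_dim :: "'a::metric_space set \<Rightarrow> real" where
  "box_dim F = Lim (at_right 0) (\<lambda>\<delta>. ln (real (cover_number \<delta> F)) / (- ln \<delta>))"

definition Phi_level :: "real^'n^'n \<Rightarrow> (real^'n) set \<Rightarrow> real \<Rightarrow> (real^'n) set" where
  "Phi_level A D lam = {\<alpha> \<in> Fset A D.
      box_dim_exists (Tset A D \<inter> ((\<lambda>x. x + \<alpha>) ` Tset A D)) \<and>
      box_dim (Tset A D \<inter> ((\<lambda>x. x + \<alpha>) ` Tset A D)) = lam}"

end

theory Submission
  imports Defs
begin

text \<open>
  Write \<open>T = T_{A,D}\<close> and let \<open>c\<close> be the ratio of \<open>A\<^sup>-\<^sup>1\<close>. If \<open>\<alpha> = \<pi>(\<delta>)\<close> with digits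
  \<open>\<delta>\<^sub>j \<in> D - D\<close> is the unique representation of \<open>\<alpha>\<close>, then \<open>T \<inter> (T + \<alpha>)\<close> consists exactly
  of the expansions whose \<open>j\<close>-th digit lies in \<open>E\<^sub>j = {d \<in> D. d - \<delta>\<^sub>j \<in> D}\<close>. The box-counting
  dimension of such a set is the growth rate of \<open>|E\<^sub>0| \<cdots> |E\<^sub>k\<^sub>-\<^sub>1|\<close> divided by \<open>ln (1/c)\<close>: the
  cylinders of length \<open>k\<close> cover it at scale \<open>c\<^sup>k\<close>, and conversely a set of diameter \<open>c\<^sup>k\<close> meets
  only boundedly many cylinders, because the \<open>k\<close>-digit radix values of two nearby points differ by
  a lattice point of bounded norm and \<open>D\<close> lies in a complete residue system.

  Given \<open>\<alpha> \<in> F_{A,D}\<close> and \<open>p \<in> [0, 1]\<close>, keep the first \<open>K\<close> digits of \<open>\<alpha>\<close> and continue with the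
  digit \<open>0\<close> (giving \<open>E\<^sub>j = D\<close>) or \<open>d\<^sub>1 - d\<^sub>2\<close> for a farthest pair (giving \<open>E\<^sub>j = {d\<^sub>1}\<close>),
  following the increments of \<open>\<lfloor>j p\<rfloor>\<close>. The new point lies within \<open>O(c\<^sup>K)\<close> of \<open>\<alpha>\<close> and has
  \<open>\<Phi> = p ln |D| / ln (1/c)\<close>, which sweeps out \<open>[0, dim\<^sub>B T]\<close>.
\<close>

section \<open>Lattice points\<close>

lemma int_vecs_zero [simp]: "0 \<in> int_vecs"
  and int_vecs_add: "z \<in> int_vecs \<Longrightarrow> w \<in> int_vecs \<Longrightarrow> z + w \<in> int_vecs"
  and int_vecs_diff: "z \<in> int_vecs \<Longrightarrow> w \<in> int_vecs \<Longrightarrow> z - w \<in> int_vecs"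
  unfolding int_vecs_def by auto

lemma int_matrix_mult_int_vecs: "int_matrix A \<Longrightarrow> z \<in> int_vecs \<Longrightarrow> A *v z \<in> int_vecs"
  unfolding int_vecs_def int_matrix_def matrix_vector_mult_def by (auto intro!: Ints_mult)

lemma finite_int_vecs_inter_cball: "finite (int_vecs \<inter> cball (0::real^'n) r)"
proof -
  let ?m = "\<lceil>r\<rceil>"
  have "int_vecs \<inter> cball (0::real^'n) r \<subseteq> (\<lambda>f. \<chi> i. of_int (f i)) ` (PiE UNIV (\<lambda>_. {-?m..?m}))"
  proof
    fix x :: "real^'n" assume x: "x \<in> int_vecs \<inter> cball 0 r"
    define f where "f = (\<lambda>i. \<lfloor>x$i\<rfloor>)"
    have xi: "x$i = of_int (f i)" for i using x unfolding int_vecs_def f_def by auto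
    have "f i \<in> {-?m..?m}" for i
    proof -
      have "\<bar>x$i\<bar> \<le> r" using x component_le_norm_cart[of x i] by auto
      then have "- of_int ?m \<le> x$i" "x$i \<le> of_int ?m" using le_of_int_ceiling[of r] by linarith+
      then have "\<lfloor>- of_int ?m :: real\<rfloor> \<le> f i" "f i \<le> \<lfloor>of_int ?m :: real\<rfloor>"
        unfolding f_def by (simp_all only: floor_mono)
      then show ?thesis by simp
    qed
    then have "f \<in> PiE UNIV (\<lambda>_. {-?m..?m})" by auto
    moreover have "x = (\<chi> i. of_int (f i))" using xi by (simp add: vec_eq_iff)
    ultimately show "x \<in> (\<lambda>f. \<chi> i. of_int (f i)) ` (PiE UNIV (\<lambda>_. {-?m..?m}))" by blast
  qed
  then show ?thesis by (rule finite_subset) (intro finite_imageI finite_PiE; auto)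
qed

lemma complete_residue_system_eq:
  assumes "complete_residue_system A R" "d \<in> R" "d' \<in> R" "z \<in> int_vecs" "d - d' = A *v z"
  shows "d = d'"
proof -
  have "d \<in> int_vecs" using assms(1,2) unfolding complete_residue_system_def by auto
  then have "\<exists>!e. e \<in> R \<and> d - e \<in> (\<lambda>v. A *v v) ` int_vecs"
    using assms(1) unfolding complete_residue_system_def by auto
  moreover have "d - d \<in> (\<lambda>v. A *v v) ` int_vecs" by (auto intro!: image_eqI[where x=0])
  ultimately show "d = d'" using assms by blast
qed

primrec radix_value :: "real^'n^'n \<Rightarrow> (nat \<Rightarrow> real^'n) \<Rightarrow> nat \<Rightarrow> real^'n" where
  "radix_value A e 0 = 0"
| "radix_value A e (Suc k) = A *v radix_value A e k + e k"

lemma radix_value_int_vecs: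
  "int_matrix A \<Longrightarrow> (\<And>j. j < k \<Longrightarrow> e j \<in> int_vecs) \<Longrightarrow> radix_value A e k \<in> int_vecs"
  by (induction k) (auto intro!: int_vecs_add int_matrix_mult_int_vecs)

section \<open>Covering numbers and box-counting dimension\<close>

lemma diameter_unbounded_eq:
  fixes S T :: "'a::metric_space set"
  assumes "\<not> bounded S" "\<not> bounded T"
  shows "diameter S = diameter T"
proof -
  have "diameter U = (LEAST z::real. False)" if U: "\<not> bounded U" for U :: "'a set"
  proof -
    let ?X = "(\<lambda>(x, y). dist x y) ` (U \<times> U)"
    have "U \<noteq> {}" using U by auto
    then obtain x0 where "x0 \<in> U" by blast
    have "\<not> bdd_above ?X"
    proof
      assume "bdd_above ?X"
      then obtain B where "\<forall>x\<in>U. \<forall>y\<in>U. dist x y \<le> B" unfolding bdd_above_def by force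
      then show False using U \<open>x0 \<in> U\<close> unfolding bounded_def by blast
    qed
    then have "(\<lambda>z. \<forall>x\<in>?X. x \<le> z) = (\<lambda>z. False)" unfolding bdd_above_def by (intro ext) blast
    moreover have "diameter U = (LEAST z::real. \<forall>x\<in>?X. x \<le> z)"
      unfolding diameter_def Sup_real_def using \<open>x0 \<in> U\<close> by auto
    ultimately show ?thesis by simp
  qed
  then show ?thesis using assms by metis
qed

text \<open>The diameter of an unbounded set is \<open>Sup\<close> of a set of reals that is not bounded above, an
  unspecified real that is the same for all unbounded sets. Below a positive value of it, small
  diameter does imply boundedness; otherwise every covering number is trivially \<open>1\<close>.\<close>
lemma bounded_if_diameter_less_diameter_UNIV:
  fixes S :: "'a::euclidean_space set"
  assumes "diameter S < diameter (UNIV :: 'a set)"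
  shows "bounded S"
  using assms diameter_unbounded_eq[of S "UNIV :: 'a set"] by auto

lemma cover_number_le:
  assumes "finite C" "F \<subseteq> \<Union>C" "\<forall>S\<in>C. diameter S \<le> \<delta>"
  shows "cover_number \<delta> F \<le> card C"
  unfolding cover_number_def by (rule Least_le) (use assms in blast)

lemma cover_number_attained:
  assumes "finite C" "F \<subseteq> \<Union>C" "\<forall>S\<in>C. diameter S \<le> \<delta>"
  obtains C' where "finite C'" "card C' = cover_number \<delta> F" "F \<subseteq> \<Union>C'" "\<forall>S\<in>C'. diameter S \<le> \<delta>"
proof -
  have "\<exists>k C. finite C \<and> card C = k \<and> F \<subseteq> \<Union>C \<and> (\<forall>S\<in>C. diameter S \<le> \<delta>)" using assms by blast
  then have "\<exists>C. finite C \<and> card C = cover_number \<delta> F \<and> F \<subseteq> \<Union>C \<and> (\<forall>S\<in>C. diameter S \<le> \<delta>)"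
    unfolding cover_number_def by (rule LeastI_ex)
  then show ?thesis using that by blast
qed

lemma box_dim_eqI:
  assumes "F \<noteq> {}" "bounded F" "((\<lambda>\<delta>. ln (real (cover_number \<delta> F)) / (- ln \<delta>)) \<longlongrightarrow> d) (at_right 0)"
  shows "box_dim_exists F \<and> box_dim F = d"
  using assms unfolding box_dim_exists_def box_dim_def by (auto intro: tendsto_Lim)

lemma box_dim_eq_0_if_diameter_UNIV_le_0:
  fixes F :: "'a::euclidean_space set"
  assumes "F \<noteq> {}" "bounded F" "diameter (UNIV :: 'a set) \<le> 0"
  shows "box_dim_exists F \<and> box_dim F = 0"
proof (rule box_dim_eqI[OF assms(1,2)])
  have one: "cover_number \<delta> F = 1" if "0 < \<delta>" for \<delta>
  proof -
    have cover: "finite {UNIV}" "F \<subseteq> \<Union>{UNIV}" "\<forall>S\<in>{UNIV :: 'a set}. diameter S \<le> \<delta>"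
      using assms(3) that by simp_all
    obtain C where C: "finite C" "card C = cover_number \<delta> F" "F \<subseteq> \<Union>C"
      by (rule cover_number_attained[OF cover])
    have "cover_number \<delta> F \<noteq> 0"
    proof
      assume "cover_number \<delta> F = 0"
      then have "C = {}" using C(1,2) by simp
      then show False using C(3) assms(1) by simp
    qed
    moreover have "cover_number \<delta> F \<le> 1" using cover_number_le[OF cover] by simp
    ultimately show ?thesis by simp
  qed
  have "\<forall>\<^sub>F \<delta> in at_right 0. 0 = ln (real (cover_number \<delta> F)) / (- ln \<delta>)"
    using eventually_at_right_real[OF zero_less_one]
  proof (rule eventually_mono)
    fix \<delta> :: real assume "\<delta> \<in> {0<..<1}"
    then show "0 = ln (real (cover_number \<delta> F)) / (- ln \<delta>)" using one by simp
  qed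
  then show "((\<lambda>\<delta>. ln (real (cover_number \<delta> F)) / (- ln \<delta>)) \<longlongrightarrow> 0) (at_right 0)"
    by (rule Lim_transform_eventually[OF tendsto_const])
qed

definition scale_index :: "real \<Rightarrow> real \<Rightarrow> nat" where
  "scale_index c \<delta> = nat \<lfloor>ln \<delta> / ln c\<rfloor>"

lemma scale_index_bounds:
  assumes c: "0 < c" "c < 1" and \<delta>: "0 < \<delta>" "\<delta> < 1"
  shows "\<delta> \<le> c ^ scale_index c \<delta>" "c ^ Suc (scale_index c \<delta>) < \<delta>"
proof -
  define k where "k = scale_index c \<delta>"
  define t where "t = ln \<delta> / ln c"
  have lc: "ln c < 0" using c by simp
  have "0 < t" unfolding t_def using lc \<delta> by (simp add: divide_neg_neg)
  then have "real k \<le> t" "t < real k + 1" unfolding k_def scale_index_def t_def[symmetric] by linarith+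
  moreover have "ln \<delta> = t * ln c" unfolding t_def using lc by simp
  ultimately have "ln \<delta> \<le> real k * ln c" "(real k + 1) * ln c < ln \<delta>"
    using lc by (simp_all add: mult_right_mono_neg mult_strict_right_mono_neg)
  then have "ln \<delta> \<le> ln (c ^ k)" "ln (c ^ Suc k) < ln \<delta>"
    using c by (simp_all add: ln_realpow ln_mult algebra_simps)
  then show "\<delta> \<le> c ^ scale_index c \<delta>" "c ^ Suc (scale_index c \<delta>) < \<delta>"
    unfolding k_def using c \<delta> by simp_all
qed

lemma filterlim_scale_index:
  assumes "0 < c" "c < 1"
  shows "filterlim (scale_index c) sequentially (at_right 0)"
  unfolding filterlim_at_top
proof
  fix k :: nat
  have "\<forall>\<^sub>F \<delta> in at_right 0. \<delta> \<in> {0<..<min (c ^ k) 1}"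
    using assms by (intro eventually_at_right_real) simp
  then show "\<forall>\<^sub>F \<delta> in at_right 0. k \<le> scale_index c \<delta>"
  proof (rule eventually_mono)
    fix \<delta> assume "\<delta> \<in> {0<..<min (c ^ k) 1}"
    then have \<delta>: "0 < \<delta>" "\<delta> < 1" "\<delta> < c ^ k" by auto
    then have "c ^ Suc (scale_index c \<delta>) < c ^ k" using scale_index_bounds(2)[OF assms \<delta>(1,2)] by linarith
    then have "k < Suc (scale_index c \<delta>)" using power_strict_decreasing_iff[OF assms] by blast
    then show "k \<le> scale_index c \<delta>" by simp
  qed
qed

lemma exists_power_mult_less:
  fixes c B \<epsilon> :: real
  assumes "0 < c" "c < 1" "0 \<le> B" "0 < \<epsilon>"
  obtains K where "c ^ K * B < \<epsilon>"
proof -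
  obtain K where K: "c ^ K < \<epsilon> / (B + 1)"
    using real_arch_pow_inv[of "\<epsilon> / (B + 1)" c] assms by auto
  have "c ^ K * B \<le> c ^ K * (B + 1)" using assms(1) by simp
  also have "\<dots> < \<epsilon>" using K assms(3) by (simp add: pos_less_divide_eq)
  finally show ?thesis using that by blast
qed

lemma ln_ratio_bounds:
  fixes N1 N2 Q F k :: nat
  assumes "0 < k" "0 < l" "real k * l \<le> - ln \<delta>" "- ln \<delta> < (real k + 1) * l"
    and "1 \<le> N1" "N1 \<le> Q * F" "F \<le> N2"
  shows "(ln N1 - ln Q) / ((real k + 1) * l) \<le> ln F / (- ln \<delta>)"
    and "ln F / (- ln \<delta>) \<le> ln N2 / (real k * l)"
proof -
  have "0 < Q * F" using assms(5,6) by linarith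
  then have "0 < Q" "0 < F" by auto
  then have lnF: "0 \<le> ln F" by simp
  have "ln N1 \<le> ln (real Q * real F)" using assms(5,6) \<open>0 < Q * F\<close> by (simp flip: of_nat_mult)
  also have "\<dots> = ln Q + ln F" using \<open>0 < Q\<close> \<open>0 < F\<close> by (simp add: ln_mult)
  finally have "ln N1 \<le> ln Q + ln F" .
  have kl: "0 < real k * l" using assms(1,2) by simp
  have ln\<delta>: "0 < - ln \<delta>" using kl assms(3) by linarith
  have "(ln N1 - ln Q) / ((real k + 1) * l) \<le> ln F / ((real k + 1) * l)"
    using \<open>ln N1 \<le> ln Q + ln F\<close> assms(2) by (intro divide_right_mono) auto
  also have "\<dots> \<le> ln F / (- ln \<delta>)"
    using lnF ln\<delta> assms(2,4) by (intro divide_left_mono mult_pos_pos) auto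
  finally show "(ln N1 - ln Q) / ((real k + 1) * l) \<le> ln F / (- ln \<delta>)" .
  have "ln F / (- ln \<delta>) \<le> ln F / (real k * l)"
    using lnF ln\<delta> assms(1-3) by (intro divide_left_mono mult_pos_pos) auto
  also have "\<dots> \<le> ln N2 / (real k * l)"
    using \<open>0 < F\<close> assms(7) kl by (intro divide_right_mono) auto
  finally show "ln F / (- ln \<delta>) \<le> ln N2 / (real k * l)" .
qed

lemma tendsto_growth_rate_rescaled:
  fixes u :: "nat \<Rightarrow> real"
  assumes lim: "(\<lambda>k. u k / k) \<longlonglongrightarrow> L" and "l \<noteq> 0"
  shows "(\<lambda>k. (u k - C) / ((real k + 1) * l)) \<longlonglongrightarrow> L / l"
    and "(\<lambda>k. u (k + h) / (real k * l)) \<longlonglongrightarrow> L / l"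
proof -
  define a where "a k = u k / k" for k
  have u: "u k = a k * k" if "0 < k" for k
    using that unfolding a_def by simp
  have "(\<lambda>k. (a k * (real k / real (Suc k)) - C * inverse (real (Suc k))) / l) \<longlonglongrightarrow> (L * 1 - C * 0) / l"
    using assms(2) by (intro tendsto_intros LIMSEQ_n_over_Suc_n LIMSEQ_inverse_real_of_nat) (auto simp: a_def lim)
  moreover have "\<forall>\<^sub>F k in sequentially.
      (a k * (real k / real (Suc k)) - C * inverse (real (Suc k))) / l = (u k - C) / ((real k + 1) * l)"
    using eventually_gt_at_top[of 0]
  proof eventually_elim
    case (elim k)
    have "a k * (real k / real (Suc k)) - C * inverse (real (Suc k)) = (u k - C) / (real k + 1)"
      using u[OF elim] by (simp add: diff_divide_distrib inverse_eq_divide add.commute)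
    then show ?case by simp
  qed
  ultimately show "(\<lambda>k. (u k - C) / ((real k + 1) * l)) \<longlonglongrightarrow> L / l"
    by (simp add: Lim_transform_eventually)
  have "(\<lambda>k. a (k + h) * (1 + real h / real k) / l) \<longlonglongrightarrow> L * (1 + 0) / l"
    using assms(2) lim unfolding a_def
    by (intro tendsto_intros LIMSEQ_ignore_initial_segment lim_const_over_n) auto
  moreover have "\<forall>\<^sub>F k in sequentially. a (k + h) * (1 + real h / real k) / l = u (k + h) / (real k * l)"
    using eventually_gt_at_top[of 0] by eventually_elim (use assms(2) in \<open>simp add: u field_simps\<close>)
  ultimately show "(\<lambda>k. u (k + h) / (real k * l)) \<longlonglongrightarrow> L / l"
    by (simp add: Lim_transform_eventually)
qed

text \<open>The box-counting argument in the abstract: covering numbers \<open>F \<delta>\<close> compared, at the scales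
  \<open>\<delta> \<approx> c ^ k\<close>, with a sequence \<open>N k\<close> of exponential growth rate \<open>L\<close>.\<close>
lemma tendsto_ln_ratio_if_scale_bounds:
  fixes N :: "nat \<Rightarrow> nat" and F :: "real \<Rightarrow> nat"
  assumes c: "0 < c" "c < 1" and "0 < \<delta>0"
    and N_pos: "\<And>k. 1 \<le> N k"
    and lim: "(\<lambda>k. ln (N k) / k) \<longlonglongrightarrow> L"
    and lower: "\<And>\<delta> k. 0 < \<delta> \<Longrightarrow> \<delta> < \<delta>0 \<Longrightarrow> \<delta> \<le> c ^ k \<Longrightarrow> N k \<le> Q * F \<delta>"
    and upper: "\<And>\<delta> k. 0 < \<delta> \<Longrightarrow> \<delta> < \<delta>0 \<Longrightarrow> c ^ Suc k < \<delta> \<Longrightarrow> F \<delta> \<le> N (k + h)"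
  shows "((\<lambda>\<delta>. ln (F \<delta>) / (- ln \<delta>)) \<longlongrightarrow> L / ln (1 / c)) (at_right 0)"
proof -
  define l where "l = ln (1 / c)"
  have l: "0 < l" "ln c = - l" unfolding l_def using c by (simp_all add: ln_div)
  define g1 where "g1 k = (ln (N k) - ln Q) / ((real k + 1) * l)" for k
  define g2 where "g2 k = ln (N (k + h)) / (real k * l)" for k
  have g1: "g1 \<longlonglongrightarrow> L / l" and g2: "g2 \<longlonglongrightarrow> L / l"
    unfolding g1_def g2_def using tendsto_growth_rate_rescaled[OF lim] l(1) by simp_all
  have bounds: "g1 (scale_index c \<delta>) \<le> ln (F \<delta>) / (- ln \<delta>) \<and> ln (F \<delta>) / (- ln \<delta>) \<le> g2 (scale_index c \<delta>)"
    if \<delta>: "0 < \<delta>" "\<delta> < min \<delta>0 c" for \<delta>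
  proof -
    define k where "k = scale_index c \<delta>"
    have k: "\<delta> \<le> c ^ k" "c ^ Suc k < \<delta>" unfolding k_def using scale_index_bounds c \<delta> by auto
    then have "0 < k" using \<delta> by (cases k) auto
    have "ln \<delta> \<le> ln (c ^ k)" "ln (c ^ Suc k) < ln \<delta>" using k c \<delta> by simp_all
    then have "real k * l \<le> - ln \<delta>" "- ln \<delta> < (real k + 1) * l"
      using c l by (simp_all add: ln_realpow ln_mult algebra_simps)
    from ln_ratio_bounds[OF \<open>0 < k\<close> l(1) this N_pos lower[OF \<delta>(1) _ k(1)] upper[OF \<delta>(1) _ k(2)]]
    show ?thesis using \<delta> unfolding g1_def g2_def k_def by simp
  qed
  have ev: "\<forall>\<^sub>F \<delta> in at_right 0. \<delta> \<in> {0<..<min \<delta>0 c}"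
    using assms(3) c by (intro eventually_at_right_real) simp
  have "((\<lambda>\<delta>. ln (F \<delta>) / (- ln \<delta>)) \<longlongrightarrow> L / l) (at_right 0)"
  proof (rule tendsto_sandwich)
    show "\<forall>\<^sub>F \<delta> in at_right 0. g1 (scale_index c \<delta>) \<le> ln (F \<delta>) / (- ln \<delta>)"
      using ev by eventually_elim (use bounds in auto)
    show "\<forall>\<^sub>F \<delta> in at_right 0. ln (F \<delta>) / (- ln \<delta>) \<le> g2 (scale_index c \<delta>)"
      using ev by eventually_elim (use bounds in auto)
    show "((\<lambda>\<delta>. g1 (scale_index c \<delta>)) \<longlongrightarrow> L / l) (at_right 0)"
      by (rule filterlim_compose[OF g1 filterlim_scale_index[OF c]])
    show "((\<lambda>\<delta>. g2 (scale_index c \<delta>)) \<longlongrightarrow> L / l) (at_right 0)"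
      by (rule filterlim_compose[OF g2 filterlim_scale_index[OF c]])
  qed
  then show ?thesis unfolding l_def .
qed

section \<open>Prescribed growth rates\<close>

lemma floor_mult_Suc_diff:
  fixes p :: real
  assumes "0 \<le> p" "p \<le> 1"
  shows "\<lfloor>real (Suc j) * p\<rfloor> - \<lfloor>real j * p\<rfloor> \<in> {0, 1}"
proof -
  have e: "real (Suc j) * p = real j * p + p" by (simp add: algebra_simps)
  have "\<lfloor>real j * p\<rfloor> \<le> \<lfloor>real j * p + p\<rfloor>" using assms by (intro floor_mono) simp
  moreover have "\<lfloor>real j * p + p\<rfloor> \<le> \<lfloor>real j * p + 1\<rfloor>" using assms by (intro floor_mono) simp
  ultimately show ?thesis unfolding e by auto
qed

lemma floor_mult_over_n_tendsto:
  fixes p :: real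
  shows "(\<lambda>k. \<lfloor>real k * p\<rfloor> / real k) \<longlonglongrightarrow> p"
proof (rule real_tendsto_sandwich)
  show "\<forall>\<^sub>F k in sequentially. p - 1 / real k \<le> \<lfloor>real k * p\<rfloor> / real k"
    using eventually_gt_at_top[of 0]
  proof eventually_elim
    case (elim k)
    have "(real k * p - 1) / real k \<le> \<lfloor>real k * p\<rfloor> / real k"
      using elim by (intro divide_right_mono) linarith+
    then show ?case using elim by (simp add: diff_divide_distrib)
  qed
  show "\<forall>\<^sub>F k in sequentially. \<lfloor>real k * p\<rfloor> / real k \<le> p"
    using eventually_gt_at_top[of 0]
  proof eventually_elim
    case (elim k)
    have "\<lfloor>real k * p\<rfloor> \<le> real k * p" by linarith
    then show ?case using elim by (simp add: field_simps)
  qed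
  show "(\<lambda>k. p - 1 / real k) \<longlonglongrightarrow> p"
    using tendsto_diff[OF tendsto_const lim_const_over_n[of 1]] by simp
qed simp

lemma averages_tendsto_if_floor_increments:
  fixes g :: "nat \<Rightarrow> real" and \<mu> :: real
  assumes g: "\<And>j. K \<le> j \<Longrightarrow> g j = real_of_int (\<lfloor>real (Suc j) * p\<rfloor> - \<lfloor>real j * p\<rfloor>) * \<mu>"
  shows "(\<lambda>k. (\<Sum>j<k. g j) / k) \<longlonglongrightarrow> p * \<mu>"
proof -
  define h where "h j = g j - real_of_int (\<lfloor>real (Suc j) * p\<rfloor> - \<lfloor>real j * p\<rfloor>) * \<mu>" for j
  have h: "(\<Sum>j<k. h j) = (\<Sum>j<K. h j)" if "K \<le> k" for k
    using that
  proof (induction k rule: dec_induct)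
    case (step k)
    then show ?case by (simp add: h_def g)
  qed simp
  have sum_g: "(\<Sum>j<k. g j) = (\<Sum>j<k. h j) + \<lfloor>real k * p\<rfloor> * \<mu>" for k
  proof -
    have "(\<Sum>j<k. real_of_int (\<lfloor>real (Suc j) * p\<rfloor> - \<lfloor>real j * p\<rfloor>)) = \<lfloor>real k * p\<rfloor>"
      using sum_lessThan_telescope[of "\<lambda>j. real_of_int \<lfloor>real j * p\<rfloor>" k] by simp
    then show ?thesis unfolding h_def sum_subtractf sum_distrib_right[symmetric] by simp
  qed
  have "\<forall>\<^sub>F k in sequentially. (\<Sum>j<K. h j) / k + \<lfloor>real k * p\<rfloor> / k * \<mu> = (\<Sum>j<k. g j) / k"
    using eventually_ge_at_top[of K]
  proof eventually_elim
    case (elim k)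
    show ?case unfolding sum_g h[OF elim] by (simp add: add_divide_distrib)
  qed
  moreover have "(\<lambda>k. (\<Sum>j<K. h j) / k + \<lfloor>real k * p\<rfloor> / k * \<mu>) \<longlonglongrightarrow> 0 + p * \<mu>"
    by (intro tendsto_intros floor_mult_over_n_tendsto)
  ultimately show ?thesis by (simp add: tendsto_cong)
qed

lemma ln_card_PiE:
  fixes k :: nat
  assumes "\<And>j. finite (E j)" "\<And>j. E j \<noteq> {}"
  shows "ln (card (PiE {..<k} E)) = (\<Sum>j<k. ln (card (E j)))"
proof -
  have "real (card (PiE {..<k} E)) = (\<Prod>j<k. real (card (E j)))" by (simp add: card_PiE)
  then show ?thesis using assms by (simp add: ln_prod)
qed

lemma obtain_fraction_of_ln:
  fixes n :: nat
  assumes "0 \<le> t" "0 < l" "t * l \<le> ln n" "n \<noteq> 0"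
  obtains p where "0 \<le> p" "p \<le> 1" "t = p * ln n / l"
proof (cases "n = 1")
  case True
  then have "t = 0" using assms(1-3) by (simp add: mult_le_0_iff)
  then show ?thesis using that[of 0] by simp
next
  case False
  then have "0 < ln n" using assms(4) by simp
  then show ?thesis using that[of "t * l / ln n"] assms(1-3) by simp
qed

text \<open>Choose \<open>d1, d2\<close> at maximal distance: by the parallelogram law, \<open>d1\<close> is the only
  element of \<open>D\<close> whose translate by \<open>d2 - d1\<close> stays in \<open>D\<close>.\<close>
lemma farthest_pair_unique_translate:
  fixes D :: "'a::real_inner set"
  assumes "finite D" "D \<noteq> {}"
  shows "\<exists>d1\<in>D. \<exists>d2\<in>D. {d\<in>D. d - (d1 - d2) \<in> D} = {d1}"
proof -
  let ?f = "\<lambda>q. norm (fst q - snd q)"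
  have fin: "finite (D \<times> D)" "D \<times> D \<noteq> {}" using assms by auto
  then have "Max (?f ` (D \<times> D)) \<in> ?f ` (D \<times> D)" by (intro Max_in) auto
  then obtain q where q: "q \<in> D \<times> D" "?f q = Max (?f ` (D \<times> D))" by auto
  obtain d1 d2 where dd: "q = (d1, d2)" by (cases q)
  have d12: "d1 \<in> D" "d2 \<in> D" using q dd by auto
  have max: "norm (a - b) \<le> norm (d1 - d2)" if "a \<in> D" "b \<in> D" for a b
  proof -
    have "?f (a, b) \<le> Max (?f ` (D \<times> D))"
      by (intro Max_ge rev_image_eqI[of "(a, b)"]) (use fin that in auto)
    then show ?thesis using q dd by simp
  qed
  have "d = d1" if d: "d \<in> D" "d - (d1 - d2) \<in> D" for d
  proof -
    define v where "v = d1 - d2"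
    define w where "w = d - v - d2"
    have n1: "norm (w + v) \<le> norm v" using max[of d d2] d d12 unfolding w_def v_def
      by (simp add: algebra_simps)
    have n2: "norm (v - w) \<le> norm v" using max[of d1 "d - v"] d d12 unfolding w_def v_def
      by (simp add: algebra_simps)
    have "norm (w + v)^2 + norm (v - w)^2 = 2 * (norm v)^2 + 2 * (norm w)^2"
      by (simp add: power2_norm_eq_inner inner_add inner_diff inner_commute)
    moreover have "norm (w + v)^2 \<le> (norm v)^2" "norm (v - w)^2 \<le> (norm v)^2"
      using n1 n2 by (auto intro: power_mono)
    ultimately have "(norm w)^2 \<le> 0" by linarith
    then have "w = 0" by simp
    then show "d = d1" unfolding w_def v_def by (simp add: algebra_simps)
  qed
  then have "{d\<in>D. d - (d1 - d2) \<in> D} = {d1}" using d12 by auto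
  then show ?thesis using d12 by blast
qed

section \<open>Digit expansions\<close>

locale similarity_matrix =
  fixes A :: "real^'n^'n" and c :: real
  assumes invertible: "invertible A"
    and ratio: "0 < c" "c < 1"
    and norm_inv_mult: "\<And>x. norm (matrix_inv A *v x) = c * norm x"
begin

abbreviation A_pow :: "nat \<Rightarrow> real^'n \<Rightarrow> real^'n" where
  "A_pow k \<equiv> (*v) A ^^ k"

abbreviation Ainv_pow :: "nat \<Rightarrow> real^'n \<Rightarrow> real^'n" where
  "Ainv_pow k \<equiv> (*v) (matrix_inv A) ^^ k"

lemma A_mult_inv [simp]: "A *v (matrix_inv A *v x) = x"
  and inv_mult_A [simp]: "matrix_inv A *v (A *v x) = x"
proof -
  have "A ** matrix_inv A = mat 1" "matrix_inv A ** A = mat 1"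
    using invertible unfolding invertible_def matrix_inv_def by (metis (mono_tags, lifting) someI_ex)+
  then show "A *v (matrix_inv A *v x) = x" "matrix_inv A *v (A *v x) = x"
    by (simp_all add: matrix_vector_mul_assoc)
qed

lemma linear_A_pow: "linear (A_pow k)"
  and linear_Ainv_pow: "linear (Ainv_pow k)"
  by (induction k) (auto intro: linear_compose linear_id)

lemma A_pow_Ainv_pow [simp]: "A_pow k (Ainv_pow k x) = x"
  and Ainv_pow_A_pow [simp]: "Ainv_pow k (A_pow k x) = x"
  by (induction k arbitrary: x) (simp_all add: funpow_swap1)

lemma norm_Ainv_pow: "norm (Ainv_pow k x) = c ^ k * norm x"
  by (induction k) (auto simp: norm_inv_mult)

lemma norm_A_pow: "norm (A_pow k x) = norm x / c ^ k"
  using norm_Ainv_pow[of k "A_pow k x"] ratio by simp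

definition digit_prefix :: "(nat \<Rightarrow> real^'n) \<Rightarrow> nat \<Rightarrow> real^'n" where
  "digit_prefix e k = (\<Sum>j<k. Ainv_pow (Suc j) (e j))"

lemma digit_prefix_cong: "(\<And>j. j < k \<Longrightarrow> e j = e' j) \<Longrightarrow> digit_prefix e k = digit_prefix e' k"
  unfolding digit_prefix_def by (rule sum.cong) auto

lemma summable_digit_series:
  assumes "\<And>j. norm (e j) \<le> M"
  shows "summable (\<lambda>j. Ainv_pow (Suc j) (e j))" "summable (\<lambda>j. norm (Ainv_pow (Suc j) (e j)))"
    and "(\<Sum>j. norm (Ainv_pow (Suc j) (e j))) \<le> M * c / (1 - c)"
proof -
  have bound: "norm (norm (Ainv_pow (Suc j) (e j))) \<le> M * c * c ^ j" for j
  proof -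
    have "norm (Ainv_pow (Suc j) (e j)) = c ^ Suc j * norm (e j)" by (rule norm_Ainv_pow)
    also have "\<dots> \<le> c ^ Suc j * M" using assms ratio by (intro mult_left_mono) auto
    finally show ?thesis by (simp add: mult_ac)
  qed
  have geo: "(\<lambda>j. M * c * c ^ j) sums (M * c / (1 - c))"
    using ratio sums_mult[OF geometric_sums, of c "M * c"] by (simp add: field_simps)
  show norms: "summable (\<lambda>j. norm (Ainv_pow (Suc j) (e j)))"
    by (rule summable_comparison_test'[OF sums_summable[OF geo] bound])
  then show "summable (\<lambda>j. Ainv_pow (Suc j) (e j))" by (rule summable_norm_cancel)
  show "(\<Sum>j. norm (Ainv_pow (Suc j) (e j))) \<le> M * c / (1 - c)"
    using suminf_le[OF _ norms sums_summable[OF geo]] bound sums_unique[OF geo] by fastforce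
qed

lemma norm_digit_map_le:
  assumes "\<And>j. norm (e j) \<le> M"
  shows "norm (digit_map A e) \<le> M / (1 - c)"
proof -
  have "0 \<le> M" using assms[of 0] norm_ge_zero[of "e 0"] by linarith
  have "norm (digit_map A e) \<le> (\<Sum>j. norm (Ainv_pow (Suc j) (e j)))"
    unfolding digit_map_def by (rule summable_norm[OF summable_digit_series(2)[OF assms]])
  also have "\<dots> \<le> M * c / (1 - c)" by (rule summable_digit_series(3)[OF assms])
  also have "\<dots> \<le> M / (1 - c)" using ratio \<open>0 \<le> M\<close> by (simp add: divide_right_mono mult_left_le)
  finally show ?thesis .
qed

lemma digit_map_diff:
  assumes "\<And>j. norm (e j) \<le> M" "\<And>j. norm (e' j) \<le> M'"
  shows "digit_map A (\<lambda>j. e j - e' j) = digit_map A e - digit_map A e'"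
  unfolding digit_map_def linear_diff[OF linear_Ainv_pow]
  by (rule suminf_diff[OF summable_digit_series(1)[OF assms(1)] summable_digit_series(1)[OF assms(2)], symmetric])

lemma digit_map_split:
  assumes "\<And>j. norm (e j) \<le> M"
  shows "digit_map A e = digit_prefix e k + Ainv_pow k (digit_map A (\<lambda>j. e (j + k)))"
proof -
  have "digit_map A e = (\<Sum>j. Ainv_pow (Suc (j + k)) (e (j + k))) + digit_prefix e k"
    unfolding digit_map_def digit_prefix_def
    by (rule suminf_split_initial_segment[OF summable_digit_series(1)[OF assms]])
  also have "(\<lambda>j. Ainv_pow (Suc (j + k)) (e (j + k))) = (\<lambda>j. Ainv_pow k (Ainv_pow (Suc j) (e (j + k))))"
  proof
    fix j
    have "Suc (j + k) = k + Suc j" by simp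
    then show "Ainv_pow (Suc (j + k)) (e (j + k)) = Ainv_pow k (Ainv_pow (Suc j) (e (j + k)))"
      by (simp only: funpow_add o_def)
  qed
  also have "(\<Sum>j. Ainv_pow k (Ainv_pow (Suc j) (e (j + k)))) = Ainv_pow k (digit_map A (\<lambda>j. e (j + k)))"
  proof -
    have "bounded_linear (Ainv_pow k)" using linear_Ainv_pow linear_conv_bounded_linear by blast
    moreover have "summable (\<lambda>j. Ainv_pow (Suc j) (e (j + k)))"
      by (rule summable_digit_series(1)) (rule assms)
    ultimately show ?thesis unfolding digit_map_def by (rule bounded_linear.suminf[symmetric])
  qed
  finally show ?thesis by simp
qed

lemma norm_digit_map_minus_prefix_le:
  assumes "\<And>j. norm (e j) \<le> M"
  shows "norm (digit_map A e - digit_prefix e k) \<le> c ^ k * (M / (1 - c))"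
proof -
  have "norm (digit_map A (\<lambda>j. e (j + k))) \<le> M / (1 - c)"
    by (rule norm_digit_map_le) (rule assms)
  moreover have "digit_map A e - digit_prefix e k = Ainv_pow k (digit_map A (\<lambda>j. e (j + k)))"
    by (subst digit_map_split[OF assms, where k = k]) simp
  moreover have "c ^ k * norm (digit_map A (\<lambda>j. e (j + k))) \<le> c ^ k * (M / (1 - c))"
    using calculation(1) ratio by (intro mult_left_mono) auto
  ultimately show ?thesis by (simp only: norm_Ainv_pow)
qed

lemma dist_digit_map_le_if_prefix_eq:
  assumes "\<And>j. norm (e j) \<le> M" "\<And>j. norm (e' j) \<le> M" "\<And>j. j < k \<Longrightarrow> e j = e' j"
  shows "dist (digit_map A e) (digit_map A e') \<le> c ^ k * (2 * M / (1 - c))"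
proof -
  have "digit_prefix e k = digit_prefix e' k" by (rule digit_prefix_cong) (rule assms(3))
  then have "dist (digit_map A e) (digit_map A e')
      \<le> norm (digit_map A e - digit_prefix e k) + norm (digit_map A e' - digit_prefix e' k)"
    using dist_triangle2[of "digit_map A e" "digit_map A e'" "digit_prefix e k"] by (simp add: dist_norm)
  also have "\<dots> \<le> c ^ k * (M / (1 - c)) + c ^ k * (M / (1 - c))"
    by (intro add_mono norm_digit_map_minus_prefix_le assms)
  finally show ?thesis by (simp add: field_simps)
qed

end

locale residue_digits = similarity_matrix A c for A :: "real^'n^'n" and c +
  fixes R :: "(real^'n) set"
  assumes int_matrix: "int_matrix A" and residue_system: "complete_residue_system A R"
begin

lemma residue_system_int_vecs: "R \<subseteq> int_vecs"
  using residue_system unfolding complete_residue_system_def by simp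

lemma residue_system_eq: "d \<in> R \<Longrightarrow> d' \<in> R \<Longrightarrow> z \<in> int_vecs \<Longrightarrow> d - d' = A *v z \<Longrightarrow> d = d'"
  using complete_residue_system_eq[OF residue_system] by blast

text \<open>Subtracting from \<open>d\<close> the lattice point \<open>A \<lfloor>A\<^sup>-\<^sup>1 d\<rfloor>\<close> is injective on \<open>R\<close> and lands in a
  bounded region of the lattice.\<close>
lemma finite_residue_system: "finite R"
proof -
  define fl :: "real^'n \<Rightarrow> real^'n" where "fl y = (\<chi> i. of_int \<lfloor>y$i\<rfloor>)" for y
  define rep where "rep d = d - A *v fl (matrix_inv A *v d)" for d
  have fl_int: "fl y \<in> int_vecs" for y unfolding fl_def int_vecs_def by auto
  have norm_fl: "norm (y - fl y) \<le> real CARD('n)" for y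
  proof -
    have "norm (y - fl y) \<le> (\<Sum>i\<in>UNIV. \<bar>(y - fl y)$i\<bar>)" by (rule norm_le_l1_cart)
    also have "\<dots> \<le> (\<Sum>i\<in>(UNIV::'n set). 1)" by (intro sum_mono) (auto simp: fl_def, linarith)
    finally show ?thesis by simp
  qed
  have "inj_on rep R"
  proof (rule inj_onI)
    fix d d' assume "d \<in> R" "d' \<in> R" "rep d = rep d'"
    then have "d - d' = A *v (fl (matrix_inv A *v d) - fl (matrix_inv A *v d'))"
      unfolding rep_def by (simp add: algebra_simps)
    then show "d = d'" using residue_system_eq \<open>d \<in> R\<close> \<open>d' \<in> R\<close> int_vecs_diff fl_int by blast
  qed
  moreover have "rep ` R \<subseteq> int_vecs \<inter> cball 0 (real CARD('n) / c)"
  proof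
    fix x assume "x \<in> rep ` R"
    then obtain d where d: "d \<in> R" "x = rep d" by auto
    have "x = A *v (matrix_inv A *v d - fl (matrix_inv A *v d))"
      using d unfolding rep_def by (simp add: matrix_vector_mult_diff_distrib)
    then have "norm x = norm (matrix_inv A *v d - fl (matrix_inv A *v d)) / c"
      using norm_A_pow[of 1] by simp
    also have "\<dots> \<le> real CARD('n) / c" using norm_fl ratio by (simp add: divide_right_mono)
    finally show "x \<in> int_vecs \<inter> cball 0 (real CARD('n) / c)"
      using d residue_system_int_vecs fl_int unfolding rep_def
      by (auto intro!: int_vecs_diff int_matrix_mult_int_vecs int_matrix)
  qed
  ultimately show ?thesis using finite_int_vecs_inter_cball by (metis finite_imageD finite_subset)
qed

lemma A_pow_digit_prefix: "A_pow k (digit_prefix e k) = radix_value A e k"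
proof (induction k)
  case (Suc k)
  have "A_pow (Suc k) (digit_prefix e (Suc k))
      = A_pow (Suc k) (digit_prefix e k) + A_pow (Suc k) (Ainv_pow (Suc k) (e k))"
    unfolding digit_prefix_def by (simp only: sum.lessThan_Suc linear_add[OF linear_A_pow])
  also have "A_pow (Suc k) (digit_prefix e k) = A *v A_pow k (digit_prefix e k)" by simp
  also have "A_pow (Suc k) (Ainv_pow (Suc k) (e k)) = e k" by (rule A_pow_Ainv_pow)
  finally show ?case using Suc by simp
qed (simp add: digit_prefix_def)

lemma radix_value_inj:
  assumes "\<And>j. j < k \<Longrightarrow> e j \<in> R" "\<And>j. j < k \<Longrightarrow> e' j \<in> R" "radix_value A e k = radix_value A e' k"
  shows "j < k \<Longrightarrow> e j = e' j"
  using assms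
proof (induction k)
  case (Suc k)
  have "radix_value A e k \<in> int_vecs" "radix_value A e' k \<in> int_vecs"
    using Suc.prems residue_system_int_vecs by (auto intro!: radix_value_int_vecs int_matrix)
  moreover have "e k - e' k = A *v (radix_value A e' k - radix_value A e k)"
    using Suc.prems(4) by (simp add: algebra_simps)
  ultimately have "e k = e' k" using residue_system_eq Suc.prems(2,3) int_vecs_diff by blast
  moreover from this have "radix_value A e k = radix_value A e' k"
    using Suc.prems(4) inv_mult_A by (metis add_right_cancel radix_value.simps(2))
  ultimately show ?case using Suc by (metis less_Suc_eq)
qed simp

end

section \<open>Moran sets\<close>

definition extend_word :: "(nat \<Rightarrow> 'a set) \<Rightarrow> nat \<Rightarrow> (nat \<Rightarrow> 'a) \<Rightarrow> nat \<Rightarrow> 'a" where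
  "extend_word E k w j = (if j < k then w j else SOME x. x \<in> E j)"

lemma extend_word_mem: "w \<in> PiE {..<k} E \<Longrightarrow> (\<And>j. E j \<noteq> {}) \<Longrightarrow> extend_word E k w j \<in> E j"
  unfolding extend_word_def by (auto simp: some_in_eq)

locale digit_system = residue_digits A c R for A :: "real^'n^'n" and c R +
  fixes D :: "(real^'n) set" and M :: real
  assumes digits_subset: "D \<subseteq> R"
    and norm_digits_le: "\<And>d. d \<in> D \<Longrightarrow> norm d \<le> M"
    and bound_nonneg: "0 \<le> M"
begin

definition radius :: real where
  "radius = M / (1 - c)"

definition moran_set :: "(nat \<Rightarrow> (real^'n) set) \<Rightarrow> (real^'n) set" where
  "moran_set E = digit_map A ` {e. \<forall>j. e j \<in> E j}"

definition lattice_ball :: "(real^'n) set" where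
  "lattice_ball = int_vecs \<inter> cball 0 (1 + 2 * radius)"

lemma finite_digits: "finite D"
  using finite_residue_system digits_subset finite_subset by blast

lemma radius_nonneg: "0 \<le> radius"
  unfolding radius_def using bound_nonneg ratio by simp

lemma finite_words:
  fixes k :: nat
  assumes "\<And>j. E j \<subseteq> D"
  shows "finite (PiE {..<k} E)"
proof (rule finite_PiE)
  show "finite (E j)" for j using finite_subset[OF assms finite_digits] .
qed simp

lemma moran_set_nonempty: "(\<And>j. E j \<noteq> {}) \<Longrightarrow> moran_set E \<noteq> {}"
  unfolding moran_set_def by (auto intro!: someI_ex[of "\<lambda>x. x \<in> E _"] exI[of _ "\<lambda>j. SOME x. x \<in> E j"])

lemma norm_digit_map_minus_prefix_le_radius:
  "(\<And>j. e j \<in> D) \<Longrightarrow> norm (digit_map A e - digit_prefix e k) \<le> c ^ k * radius"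
  unfolding radius_def by (rule norm_digit_map_minus_prefix_le) (use norm_digits_le in blast)

lemma moran_set_subset_cball: "(\<And>j. E j \<subseteq> D) \<Longrightarrow> moran_set E \<subseteq> cball 0 radius"
  unfolding moran_set_def radius_def using norm_digits_le
  by (auto intro!: norm_digit_map_le) blast

definition cylinder :: "(nat \<Rightarrow> (real^'n) set) \<Rightarrow> nat \<Rightarrow> (nat \<Rightarrow> real^'n) \<Rightarrow> (real^'n) set" where
  "cylinder E k w = digit_map A ` {e. (\<forall>j. e j \<in> E j) \<and> (\<forall>j<k. e j = w j)}"

lemma diameter_cylinder_le:
  assumes E: "\<And>j. E j \<subseteq> D"
  shows "diameter (cylinder E k w) \<le> c ^ k * (2 * radius)"
proof (rule diameter_le)
  show "cylinder E k w \<noteq> {} \<or> 0 \<le> c ^ k * (2 * radius)" using radius_nonneg ratio by simp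
  have near: "norm (x - digit_prefix w k) \<le> c ^ k * radius" if x: "x \<in> cylinder E k w" for x
  proof -
    obtain e where e: "\<forall>j. e j \<in> E j" "\<forall>j<k. e j = w j" "x = digit_map A e"
      using x unfolding cylinder_def by auto
    have "digit_prefix e k = digit_prefix w k" using e(2) by (intro digit_prefix_cong) auto
    then show ?thesis using norm_digit_map_minus_prefix_le_radius[of e k] e(1,3) E by auto
  qed
  fix x y assume "x \<in> cylinder E k w" "y \<in> cylinder E k w"
  have "norm (x - y) = norm ((x - digit_prefix w k) - (y - digit_prefix w k))" by simp
  also have "\<dots> \<le> norm (x - digit_prefix w k) + norm (y - digit_prefix w k)"
    by (rule norm_triangle_ineq4)
  also have "\<dots> \<le> c ^ k * (2 * radius)" using near[OF \<open>x \<in> _\<close>] near[OF \<open>y \<in> _\<close>] by simp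
  finally show "norm (x - y) \<le> c ^ k * (2 * radius)" .
qed

lemma moran_set_cover:
  assumes E: "\<And>j. E j \<subseteq> D" and \<delta>: "c ^ k * (2 * radius) \<le> \<delta>"
  obtains C where "finite C" "card C \<le> card (PiE {..<k} E)" "moran_set E \<subseteq> \<Union>C"
    "\<forall>S\<in>C. diameter S \<le> \<delta>"
proof
  define C where "C = cylinder E k ` PiE {..<k} E"
  show "finite C" "card C \<le> card (PiE {..<k} E)"
    unfolding C_def using finite_words[OF E] by (auto intro: card_image_le)
  show "moran_set E \<subseteq> \<Union>C"
  proof
    fix x assume "x \<in> moran_set E"
    then obtain e where e: "\<forall>j. e j \<in> E j" "x = digit_map A e" unfolding moran_set_def by auto
    then have "restrict e {..<k} \<in> PiE {..<k} E" "x \<in> cylinder E k (restrict e {..<k})"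
      unfolding cylinder_def by auto
    then show "x \<in> \<Union>C" unfolding C_def by blast
  qed
  show "\<forall>S\<in>C. diameter S \<le> \<delta>"
  proof
    fix S assume "S \<in> C"
    then obtain w where "S = cylinder E k w" unfolding C_def by auto
    then show "diameter S \<le> \<delta>" using diameter_cylinder_le[of E k w] E \<delta> by simp
  qed
qed

lemma cover_number_moran_set_le:
  assumes "\<And>j. E j \<subseteq> D" "c ^ k * (2 * radius) \<le> \<delta>"
  shows "cover_number \<delta> (moran_set E) \<le> card (PiE {..<k} E)"
proof -
  obtain C where "finite C" "card C \<le> card (PiE {..<k} E)" "moran_set E \<subseteq> \<Union>C" "\<forall>S\<in>C. diameter S \<le> \<delta>"
    using moran_set_cover[OF assms] .
  then show ?thesis using cover_number_le le_trans by blast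
qed

lemma radix_value_diff_in_lattice_ball:
  assumes e: "\<And>j. e j \<in> D" and e': "\<And>j. e' j \<in> D"
    and dist: "dist (digit_map A e) (digit_map A e') \<le> c ^ k"
  shows "radix_value A e k - radix_value A e' k \<in> lattice_ball"
  unfolding lattice_ball_def
proof
  show "radix_value A e k - radix_value A e' k \<in> int_vecs"
    using e e' digits_subset residue_system_int_vecs
    by (intro int_vecs_diff radix_value_int_vecs int_matrix) auto
  have "norm (digit_prefix e k - digit_prefix e' k)
      \<le> dist (digit_map A e) (digit_map A e') + norm (digit_map A e - digit_prefix e k)
        + norm (digit_map A e' - digit_prefix e' k)"
    unfolding dist_norm by norm
  also have "\<dots> \<le> c ^ k * (1 + 2 * radius)"
    using dist norm_digit_map_minus_prefix_le_radius[where e = e and k = k, OF e]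
      norm_digit_map_minus_prefix_le_radius[where e = e' and k = k, OF e']
    by (simp add: algebra_simps)
  finally have "norm (digit_prefix e k - digit_prefix e' k) \<le> c ^ k * (1 + 2 * radius)" .
  moreover have "radix_value A e k - radix_value A e' k = A_pow k (digit_prefix e k - digit_prefix e' k)"
    by (simp add: linear_diff[OF linear_A_pow] A_pow_digit_prefix)
  ultimately show "radix_value A e k - radix_value A e' k \<in> cball 0 (1 + 2 * radius)"
    using ratio by (simp add: norm_A_pow divide_le_eq mult.commute)
qed

lemma card_words_in_small_set_le:
  assumes E: "\<And>j. E j \<subseteq> D" "\<And>j. E j \<noteq> {}"
    and S: "bounded S" "diameter S \<le> c ^ k"
  shows "card {w \<in> PiE {..<k} E. digit_map A (extend_word E k w) \<in> S} \<le> card lattice_ball"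
    (is "card ?W \<le> _")
proof (cases "?W = {}")
  case False
  then obtain w0 where w0: "w0 \<in> ?W" by auto
  let ?f = "\<lambda>w. radix_value A (extend_word E k w) k - radix_value A (extend_word E k w0) k"
  have digits: "extend_word E k w j \<in> D" if "w \<in> ?W" for w j
    using extend_word_mem[of w k E j] that E by auto
  have "inj_on ?f ?W"
  proof (rule inj_onI)
    fix w v assume wv: "w \<in> ?W" "v \<in> ?W" "?f w = ?f v"
    then have "j < k \<Longrightarrow> extend_word E k w j = extend_word E k v j" for j
      using digits digits_subset by (intro radix_value_inj) auto
    then show "w = v" using wv by (auto simp: extend_word_def intro: PiE_ext)
  qed
  moreover have "?f ` ?W \<subseteq> lattice_ball"
  proof
    fix z assume "z \<in> ?f ` ?W"
    then obtain w where w: "w \<in> ?W" "z = ?f w" by auto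
    have "dist (digit_map A (extend_word E k w)) (digit_map A (extend_word E k w0)) \<le> c ^ k"
      using w w0 S diameter_bounded_bound order_trans by blast
    then show "z \<in> lattice_ball"
      unfolding w(2) using digits w(1) w0 by (intro radix_value_diff_in_lattice_ball)
  qed
  ultimately show ?thesis
    unfolding lattice_ball_def by (intro card_inj_on_le finite_int_vecs_inter_cball)
qed (simp only: card.empty zero_le)

lemma card_words_le_cover_number:
  assumes E: "\<And>j. E j \<subseteq> D" "\<And>j. E j \<noteq> {}"
    and \<delta>: "0 < \<delta>" "\<delta> \<le> c ^ k" "\<delta> < diameter (UNIV :: (real^'n) set)"
  shows "card (PiE {..<k} E) \<le> card lattice_ball * cover_number \<delta> (moran_set E)"
proof -
  have "0 \<le> 2 * radius" using radius_nonneg by simp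
  then obtain k' where "c ^ k' * (2 * radius) < \<delta>" by (rule exists_power_mult_less[OF ratio _ \<delta>(1)])
  then obtain C0 where "finite C0" "card C0 \<le> card (PiE {..<k'} E)" "moran_set E \<subseteq> \<Union>C0"
      "\<forall>S\<in>C0. diameter S \<le> \<delta>"
    by (rule moran_set_cover[OF E(1) less_imp_le])
  with cover_number_attained obtain C where C: "finite C" "card C = cover_number \<delta> (moran_set E)"
      "moran_set E \<subseteq> \<Union>C" "\<forall>S\<in>C. diameter S \<le> \<delta>"
    by blast
  define W where "W S = {w \<in> PiE {..<k} E. digit_map A (extend_word E k w) \<in> S}" for S
  have "PiE {..<k} E \<subseteq> (\<Union>S\<in>C. W S)"
  proof
    fix w assume w: "w \<in> PiE {..<k} E"
    then have "digit_map A (extend_word E k w) \<in> moran_set E"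
      unfolding moran_set_def using extend_word_mem[OF w E(2)] by blast
    then obtain S where "S \<in> C" "digit_map A (extend_word E k w) \<in> S" using C(3) by blast
    then show "w \<in> (\<Union>S\<in>C. W S)" unfolding W_def using w by blast
  qed
  then have "card (PiE {..<k} E) \<le> card (\<Union>S\<in>C. W S)"
    using C(1) finite_words[OF E(1)] unfolding W_def by (intro card_mono) auto
  also have "\<dots> \<le> (\<Sum>S\<in>C. card (W S))" by (rule card_UN_le[OF C(1)])
  also have "\<dots> \<le> (\<Sum>S\<in>C. card lattice_ball)"
  proof (rule sum_mono)
    fix S assume "S \<in> C"
    then have "diameter S \<le> \<delta>" using C(4) by blast
    then show "card (W S) \<le> card lattice_ball" unfolding W_def using \<delta>
      by (intro card_words_in_small_set_le E bounded_if_diameter_less_diameter_UNIV) auto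
  qed
  also have "\<dots> = card lattice_ball * cover_number \<delta> (moran_set E)" using C(2) by simp
  finally show ?thesis .
qed

lemma moran_set_box_dim:
  assumes E: "\<And>j. E j \<subseteq> D" "\<And>j. E j \<noteq> {}"
    and diam: "0 < diameter (UNIV :: (real^'n) set)"
    and lim: "(\<lambda>k. ln (card (PiE {..<k} E)) / k) \<longlonglongrightarrow> L"
  shows "box_dim_exists (moran_set E) \<and> box_dim (moran_set E) = L / ln (1 / c)"
proof (rule box_dim_eqI)
  show "moran_set E \<noteq> {}" by (rule moran_set_nonempty) (rule E(2))
  show "bounded (moran_set E)" by (rule bounded_subset[OF bounded_cball moran_set_subset_cball[OF E(1)]])
  have "0 \<le> 2 * radius" using radius_nonneg by simp
  then obtain k0 where k0: "c ^ k0 * (2 * radius) < c" by (rule exists_power_mult_less[OF ratio _ ratio(1)])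
  have card_pos: "1 \<le> card (PiE {..<k} E)" for k
    using finite_words[OF E(1)] E(2) by (simp add: Suc_le_eq card_gt_0_iff PiE_eq_empty_iff)
  show "((\<lambda>\<delta>. ln (cover_number \<delta> (moran_set E)) / (- ln \<delta>)) \<longlongrightarrow> L / ln (1 / c)) (at_right 0)"
  proof (rule tendsto_ln_ratio_if_scale_bounds[where N = "\<lambda>k. card (PiE {..<k} E)" and h = k0
        and F = "\<lambda>\<delta>. cover_number \<delta> (moran_set E)" and Q = "card lattice_ball", OF ratio diam card_pos lim])
    show "card (PiE {..<k} E) \<le> card lattice_ball * cover_number \<delta> (moran_set E)"
      if "0 < \<delta>" "\<delta> < diameter (UNIV :: (real^'n) set)" "\<delta> \<le> c ^ k" for \<delta> k
      using card_words_le_cover_number[OF E that(1,3,2)] .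
    show "cover_number \<delta> (moran_set E) \<le> card (PiE {..<k + k0} E)"
      if "0 < \<delta>" "\<delta> < diameter (UNIV :: (real^'n) set)" "c ^ Suc k < \<delta>" for \<delta> k
    proof (rule cover_number_moran_set_le[OF E(1)])
      have "c ^ (k + k0) * (2 * radius) = c ^ k * (c ^ k0 * (2 * radius))" by (simp add: power_add)
      also have "\<dots> \<le> c ^ k * c" using k0 ratio by (simp add: mult_left_mono)
      finally show "c ^ (k + k0) * (2 * radius) \<le> \<delta>" using that(3) by (simp add: mult.commute)
    qed
  qed
qed

section \<open>Intersections of the attractor with its translates\<close>

lemma norm_diffset_le:
  assumes "x \<in> diffset D"
  shows "norm x \<le> 2 * M"
proof -
  obtain a b where "a \<in> D" "b \<in> D" "x = a - b" using assms unfolding diffset_def by blast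
  then show ?thesis
    using norm_triangle_ineq4[of a b] norm_digits_le[of a] norm_digits_le[of b] by simp
qed

lemma Tset_eq_moran_set: "Tset A E = moran_set (\<lambda>_. E)"
  unfolding Tset_def moran_set_def ..

lemma digit_map_diff_digits:
  "\<forall>j. a j \<in> D \<Longrightarrow> \<forall>j. b j \<in> D \<Longrightarrow> digit_map A (\<lambda>j. a j - b j) = digit_map A a - digit_map A b"
  by (rule digit_map_diff) (auto intro: norm_digits_le)

lemma Tset_inter_translate:
  "Tset A D \<inter> (\<lambda>x. x + \<alpha>) ` Tset A D =
    {digit_map A a | a. (\<forall>j. a j \<in> D) \<and> (\<exists>b. (\<forall>j. b j \<in> D) \<and> \<alpha> = digit_map A (\<lambda>j. a j - b j))}"
proof (intro equalityI subsetI)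
  fix x assume "x \<in> Tset A D \<inter> (\<lambda>x. x + \<alpha>) ` Tset A D"
  then obtain a b where ab: "\<forall>j. a j \<in> D" "\<forall>j. b j \<in> D" "x = digit_map A a" "x = digit_map A b + \<alpha>"
    unfolding Tset_def by auto
  then have "\<alpha> = digit_map A a - digit_map A b" by (simp add: algebra_simps)
  then have "\<alpha> = digit_map A (\<lambda>j. a j - b j)" using digit_map_diff_digits[OF ab(1,2)] by simp
  then show "x \<in> {digit_map A a | a. (\<forall>j. a j \<in> D) \<and> (\<exists>b. (\<forall>j. b j \<in> D) \<and> \<alpha> = digit_map A (\<lambda>j. a j - b j))}"
    using ab by blast
next
  fix x assume "x \<in> {digit_map A a | a. (\<forall>j. a j \<in> D) \<and> (\<exists>b. (\<forall>j. b j \<in> D) \<and> \<alpha> = digit_map A (\<lambda>j. a j - b j))}"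
  then obtain a b where ab: "\<forall>j. a j \<in> D" "\<forall>j. b j \<in> D" "x = digit_map A a"
      "\<alpha> = digit_map A (\<lambda>j. a j - b j)"
    by auto
  then have "x = digit_map A b + \<alpha>" using digit_map_diff_digits[OF ab(1,2)] by simp
  moreover have "digit_map A b \<in> Tset A D" "x \<in> Tset A D" using ab unfolding Tset_def by auto
  ultimately show "x \<in> Tset A D \<inter> (\<lambda>x. x + \<alpha>) ` Tset A D" by blast
qed

lemma Fset_eq_Tset_diffset: "Fset A D = Tset A (diffset D)"
proof (intro equalityI subsetI)
  fix \<alpha> assume "\<alpha> \<in> Fset A D"
  then obtain a b where "\<forall>j. a j \<in> D" "\<forall>j. b j \<in> D" "\<alpha> = digit_map A (\<lambda>j. a j - b j)"
    unfolding Fset_def Tset_inter_translate by auto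
  then show "\<alpha> \<in> Tset A (diffset D)" unfolding Tset_def diffset_def by blast
next
  fix \<alpha> assume "\<alpha> \<in> Tset A (diffset D)"
  then obtain e where e: "\<forall>j. e j \<in> diffset D" "\<alpha> = digit_map A e" unfolding Tset_def by auto
  then have "\<forall>j. \<exists>a b. a \<in> D \<and> b \<in> D \<and> e j = a - b" unfolding diffset_def by blast
  then obtain a b where "\<forall>j. a j \<in> D \<and> b j \<in> D \<and> e j = a j - b j" by metis
  then have "\<forall>j. a j \<in> D" "\<forall>j. b j \<in> D" "e = (\<lambda>j. a j - b j)" by auto
  with e(2) have "\<forall>j. a j \<in> D" "\<forall>j. b j \<in> D" "\<alpha> = digit_map A (\<lambda>j. a j - b j)" by simp_all
  then have "digit_map A a \<in> Tset A D \<inter> (\<lambda>x. x + \<alpha>) ` Tset A D"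
    unfolding Tset_inter_translate by blast
  then show "\<alpha> \<in> Fset A D" unfolding Fset_def by blast
qed

lemma translate_digits_nonempty: "x \<in> diffset D \<Longrightarrow> {d\<in>D. d - x \<in> D} \<noteq> {}"
  unfolding diffset_def by auto

lemma Tset_inter_translate_unique:
  assumes dl: "\<forall>j. dl j \<in> diffset D" and unique: "\<exists>!e. is_rep A (diffset D) (digit_map A dl) e"
  shows "Tset A D \<inter> (\<lambda>x. x + digit_map A dl) ` Tset A D = moran_set (\<lambda>j. {d\<in>D. d - dl j \<in> D})"
proof (intro equalityI subsetI)
  fix x assume "x \<in> Tset A D \<inter> (\<lambda>x. x + digit_map A dl) ` Tset A D"
  then obtain a b where ab: "\<forall>j. a j \<in> D" "\<forall>j. b j \<in> D" "x = digit_map A a"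
      "digit_map A dl = digit_map A (\<lambda>j. a j - b j)"
    unfolding Tset_inter_translate by blast
  have "is_rep A (diffset D) (digit_map A dl) (\<lambda>j. a j - b j)"
    using ab unfolding is_rep_def diffset_def by auto
  moreover have "is_rep A (diffset D) (digit_map A dl) dl" using dl unfolding is_rep_def by simp
  ultimately have dl_eq: "(\<lambda>j. a j - b j) = dl" using unique by blast
  have "a j - dl j = b j" for j
  proof -
    have "dl j = a j - b j" using fun_cong[OF dl_eq, of j] by simp
    then show ?thesis by simp
  qed
  then have "\<forall>j. a j \<in> {d\<in>D. d - dl j \<in> D}" using ab(1,2) by simp
  then show "x \<in> moran_set (\<lambda>j. {d\<in>D. d - dl j \<in> D})" unfolding moran_set_def using ab(3) by blast
next
  fix x assume "x \<in> moran_set (\<lambda>j. {d\<in>D. d - dl j \<in> D})"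
  then obtain a where a: "\<forall>j. a j \<in> D \<and> a j - dl j \<in> D" "x = digit_map A a"
    unfolding moran_set_def by auto
  moreover have "\<exists>b. (\<forall>j. b j \<in> D) \<and> digit_map A dl = digit_map A (\<lambda>j. a j - b j)"
    using a(1) by (intro exI[of _ "\<lambda>j. a j - dl j"]) simp
  ultimately show "x \<in> Tset A D \<inter> (\<lambda>x. x + digit_map A dl) ` Tset A D"
    unfolding Tset_inter_translate by blast
qed

lemma digit_map_mem_Phi_level:
  assumes diam: "0 < diameter (UNIV :: (real^'n) set)"
    and dl: "\<forall>j. dl j \<in> diffset D" and unique: "\<exists>!e. is_rep A (diffset D) (digit_map A dl) e"
    and lim: "(\<lambda>k. ln (card (PiE {..<k} (\<lambda>j. {d\<in>D. d - dl j \<in> D}))) / k) \<longlonglongrightarrow> L"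
  shows "digit_map A dl \<in> Phi_level A D (L / ln (1 / c))"
proof -
  have "{d\<in>D. d - dl j \<in> D} \<noteq> {}" for j using dl translate_digits_nonempty by blast
  then have "box_dim_exists (moran_set (\<lambda>j. {d\<in>D. d - dl j \<in> D}))
      \<and> box_dim (moran_set (\<lambda>j. {d\<in>D. d - dl j \<in> D})) = L / ln (1 / c)"
    by (intro moran_set_box_dim diam lim) auto
  moreover have "digit_map A dl \<in> Fset A D"
    unfolding Fset_eq_Tset_diffset Tset_def using dl by auto
  ultimately show ?thesis by (simp add: Phi_level_def Tset_inter_translate_unique[OF dl unique])
qed

text \<open>The digit \<open>0\<close> keeps all of \<open>D\<close>, the digit \<open>d1 - d2\<close> keeps only \<open>d1\<close>.\<close>
lemma tendsto_ln_card_translates: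
  assumes dl: "\<forall>j. dl j \<in> diffset D" and p: "0 \<le> p" "p \<le> 1"
    and d12: "{d\<in>D. d - (d1 - d2) \<in> D} = {d1}"
    and tail: "\<And>j. K \<le> j \<Longrightarrow> dl j = (if \<lfloor>real (Suc j) * p\<rfloor> - \<lfloor>real j * p\<rfloor> = 1 then 0 else d1 - d2)"
  shows "(\<lambda>k. ln (card (PiE {..<k} (\<lambda>j. {d\<in>D. d - dl j \<in> D}))) / k) \<longlonglongrightarrow> p * ln (card D)"
proof -
  have "{d\<in>D. d - dl j \<in> D} \<noteq> {}" for j using dl translate_digits_nonempty by blast
  then have "ln (card (PiE {..<k} (\<lambda>j. {d\<in>D. d - dl j \<in> D}))) = (\<Sum>j<k. ln (card {d\<in>D. d - dl j \<in> D}))"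
    for k using finite_digits by (intro ln_card_PiE) auto
  moreover have "ln (card {d\<in>D. d - dl j \<in> D})
      = real_of_int (\<lfloor>real (Suc j) * p\<rfloor> - \<lfloor>real j * p\<rfloor>) * ln (card D)" if "K \<le> j" for j
    using floor_mult_Suc_diff[OF p, of j] tail[OF that] d12 by auto
  then have "(\<lambda>k. (\<Sum>j<k. ln (card {d\<in>D. d - dl j \<in> D})) / k) \<longlonglongrightarrow> p * ln (card D)"
    by (rule averages_tendsto_if_floor_increments)
  ultimately show ?thesis by simp
qed

lemma Phi_level_approximates:
  assumes unique: "\<forall>x\<in>Tset A (diffset D). \<exists>!e. is_rep A (diffset D) x e"
    and diam: "0 < diameter (UNIV :: (real^'n) set)"
    and p: "0 \<le> p" "p \<le> 1" and \<alpha>: "\<alpha> \<in> Fset A D" and \<epsilon>: "0 < \<epsilon>"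
  shows "\<exists>\<alpha>'\<in>Phi_level A D (p * ln (card D) / ln (1 / c)). dist \<alpha>' \<alpha> < \<epsilon>"
proof -
  obtain dl where dl: "\<forall>j. dl j \<in> diffset D" "\<alpha> = digit_map A dl"
    using \<alpha> unfolding Fset_eq_Tset_diffset Tset_def by auto
  then have "D \<noteq> {}" unfolding diffset_def by auto
  then obtain d1 d2 where d12: "d1 \<in> D" "d2 \<in> D" "{d\<in>D. d - (d1 - d2) \<in> D} = {d1}"
    using farthest_pair_unique_translate[OF finite_digits] by blast
  define B where "B = 2 * (2 * M) / (1 - c)"
  have "0 \<le> B" unfolding B_def using bound_nonneg ratio by simp
  then obtain K where K: "c ^ K * B < \<epsilon>" using exists_power_mult_less[OF ratio _ \<epsilon>] by blast
  define dl' where "dl' j = (if j < K then dl j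
    else if \<lfloor>real (Suc j) * p\<rfloor> - \<lfloor>real j * p\<rfloor> = 1 then 0 else d1 - d2)" for j
  have dl': "\<forall>j. dl' j \<in> diffset D"
    unfolding dl'_def diffset_def using dl(1) d12(1,2) by (auto simp: diffset_def)
  have "digit_map A dl' \<in> Phi_level A D (p * ln (card D) / ln (1 / c))"
  proof (rule digit_map_mem_Phi_level[OF diam dl'])
    show "\<exists>!e. is_rep A (diffset D) (digit_map A dl') e" using unique dl' unfolding Tset_def by auto
    show "(\<lambda>k. ln (card (PiE {..<k} (\<lambda>j. {d\<in>D. d - dl' j \<in> D}))) / k) \<longlonglongrightarrow> p * ln (card D)"
      by (rule tendsto_ln_card_translates[OF dl' p d12(3), of K]) (simp add: dl'_def)
  qed
  moreover have "dist (digit_map A dl') \<alpha> \<le> c ^ K * B"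
    unfolding dl(2) B_def using dl dl' norm_diffset_le
    by (intro dist_digit_map_le_if_prefix_eq) (auto simp: dl'_def)
  ultimately show ?thesis using K by (meson bexI le_less_trans)
qed

lemma box_dim_Tset:
  assumes "0 < diameter (UNIV :: (real^'n) set)" "D \<noteq> {}"
  shows "box_dim (Tset A D) = ln (card D) / ln (1 / c)"
proof -
  have "card D > 0" using assms(2) finite_digits by (simp add: card_gt_0_iff)
  have lim: "(\<lambda>k. ln (card (PiE {..<k} (\<lambda>_. D))) / k) \<longlonglongrightarrow> ln (card D)"
  proof (rule Lim_transform_eventually[OF tendsto_const])
    show "\<forall>\<^sub>F k in sequentially. ln (card D) = ln (card (PiE {..<k} (\<lambda>_. D))) / k"
      using eventually_gt_at_top[of 0]
    proof eventually_elim
      case (elim k)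
      have "card (PiE {..<k} (\<lambda>_. D)) = card D ^ k" by (simp add: card_PiE)
      then have "ln (card (PiE {..<k} (\<lambda>_. D))) = k * ln (card D)"
        using \<open>card D > 0\<close> by (simp add: ln_realpow)
      then show ?case using elim by simp
    qed
  qed
  have "box_dim_exists (moran_set (\<lambda>_. D)) \<and> box_dim (moran_set (\<lambda>_. D)) = ln (card D) / ln (1 / c)"
    by (rule moran_set_box_dim[OF _ _ assms(1) lim]) (simp_all add: assms(2))
  then show ?thesis unfolding Tset_eq_moran_set by simp
qed

lemma bounded_Tset: "bounded (Tset A D)"
  unfolding Tset_eq_moran_set by (rule bounded_subset[OF bounded_cball moran_set_subset_cball]) simp

lemma Fset_subset_Phi_level_0:
  assumes "diameter (UNIV :: (real^'n) set) \<le> 0"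
  shows "Fset A D \<subseteq> Phi_level A D 0"
proof
  fix \<alpha> assume \<alpha>: "\<alpha> \<in> Fset A D"
  let ?I = "Tset A D \<inter> (\<lambda>x. x + \<alpha>) ` Tset A D"
  have "?I \<noteq> {}" using \<alpha> unfolding Fset_def by simp
  moreover have "bounded ?I" using bounded_Tset by (rule bounded_subset) (rule Int_lower1)
  ultimately have "box_dim_exists ?I \<and> box_dim ?I = 0"
    by (rule box_dim_eq_0_if_diameter_UNIV_le_0[OF _ _ assms])
  then show "\<alpha> \<in> Phi_level A D 0" using \<alpha> unfolding Phi_level_def by simp
qed

lemma Fset_subset_closure_Phi_level:
  assumes unique: "\<forall>x\<in>Tset A (diffset D). \<exists>!e. is_rep A (diffset D) x e"
    and lam: "0 \<le> lam" "lam \<le> box_dim (Tset A D)"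
  shows "Fset A D \<subseteq> closure (Phi_level A D lam)"
proof (cases "D = {}")
  case True
  then show ?thesis unfolding Fset_def Tset_def by auto
next
  case False
  then have "Tset A D \<noteq> {}" unfolding Tset_eq_moran_set by (intro moran_set_nonempty)
  show ?thesis
  proof (cases "diameter (UNIV :: (real^'n) set) \<le> 0")
    case True
    then have "box_dim (Tset A D) = 0"
      using box_dim_eq_0_if_diameter_UNIV_le_0[OF \<open>Tset A D \<noteq> {}\<close> bounded_Tset] by blast
    then show ?thesis using Fset_subset_Phi_level_0[OF True] closure_subset lam by force
  next
    case False
    then have diam: "0 < diameter (UNIV :: (real^'n) set)" by simp
    have l: "0 < ln (1 / c)" "lam * ln (1 / c) \<le> ln (card D)"
      using lam box_dim_Tset[OF diam \<open>D \<noteq> {}\<close>] ratio by (auto simp: pos_le_divide_eq)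
    have "card D \<noteq> 0" using \<open>D \<noteq> {}\<close> finite_digits by simp
    with lam(1) l obtain p where p: "0 \<le> p" "p \<le> 1" "lam = p * ln (card D) / ln (1 / c)"
      by (rule obtain_fraction_of_ln)
    show ?thesis
    proof
      fix \<alpha> assume "\<alpha> \<in> Fset A D"
      then show "\<alpha> \<in> closure (Phi_level A D lam)"
        unfolding closure_approachable p(3) using Phi_level_approximates[OF unique diam p(1,2)] by blast
    qed
  qed
qed

end

theorem mainTheorem9:
  fixes A :: "real^'n^'n" and D :: "(real^'n) set" and lam :: real
  assumes "int_matrix A" and "invertible A"
    and "is_similarity (\<lambda>x. matrix_inv A *v x)"
    and "\<exists>R. complete_residue_system A R \<and> D \<subseteq> R"
    and "\<forall>x\<in>Tset A (diffset D). \<exists>!e. is_rep A (diffset D) x e"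
    and "0 \<le> lam" and "lam \<le> box_dim (Tset A D)"
  shows "Fset A D \<subseteq> closure (Phi_level A D lam)"
proof -
  obtain R where R: "complete_residue_system A R" "D \<subseteq> R" using assms(4) by blast
  obtain c where c: "0 < c" "c < 1" "\<forall>x y. norm (matrix_inv A *v x - matrix_inv A *v y) = c * norm (x - y)"
    using assms(3) unfolding is_similarity_def by blast
  have "norm (matrix_inv A *v x) = c * norm x" for x using c(3)[rule_format, of x 0] by simp
  then interpret residue_digits A c R using assms(1,2) c(1,2) R(1) by unfold_locales
  have "finite D" using finite_residue_system R(2) finite_subset by blast
  then interpret digit_system A c R D "\<Sum>d\<in>D. norm d"
    using R(2) by unfold_locales (auto intro: member_le_sum sum_nonneg)
  show ?thesis using Fset_subset_closure_Phi_level assms(5-7) by blast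
qed

end
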